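(* Let $(F,<_F)$ and $(G,<_G)$ be ordered groups, let $\prec$ be the ordering of $F*G$ described in the context, and give $F\times G$ the lexicographic ordering. Then the canonical homomorphism $\alpha\colon F*G\to F\times G$, $\alpha(f_1g_1f_2\cdots f_kg_k)=(f_1\cdots f_k,\,g_1\cdots g_k)$, is an order-homomorphism: $x\preceq y$ implies $\alpha(x)\le\alpha(y)$.
   Context: An ordered group is a group with a strict total order invariant under left and right multiplication. A homomorphism $\phi\colon(F,<_F)\to(G,<_G)$ of ordered groups is an order-homomorphism if $x\le_F y$ implies $\phi(x)\le_G\phi(y)$. Lexicographic order on $F\times G$: $(f,g)<(f',g')$ iff $f<_Ff'$, or $f=f'$ and $g<_Gg'$. Construction of $\prec$: in $R=\mathbb{Z}(F\times G)$ call a nonzero element positive if the coefficient of its lexicographically largest group element is a positive integer. Let $\rho\colon F*G\to M_2(R[t])$ be the homomorphism with $\rho(f)=\begin{pmatrix} f&(f-1)t\\0&1\end{pmatrix}$, $\rho(g)=\begin{pmatrix}1&0\\(g-1)t&g\end{pmatrix}$ ($f\in F,g\in G$); it is injective. Order the matrix positions $(1,1)$, $(2,2)$, then the off-diagonal positions in a fixed order. A nonzero $M=\sum_iM_it^i$ ($M_i\in M_2(R)$) is positive if for the least $n$ with $M_n\neq 0$ the first nonzero entry of $M_n$ is positive in $R$. Set $x\prec y$ iff $\rho(y)-\rho(x)$ is positive. *)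

theory Defs
  imports Main "HOL-Library.Poly_Mapping" "HOL-Library.Product_Plus"
begin

(* Groups are modelled by the (not necessarily commutative) type class group_add;
   the group operation is written +, the identity 0.  An ordering of a group is
   given as an explicit strict relation. *)

definition ordered_group :: "('a::group_add \<Rightarrow> 'a \<Rightarrow> bool) \<Rightarrow> bool" where
  "ordered_group lt \<longleftrightarrow>
     (\<forall>x. \<not> lt x x) \<and>
     (\<forall>x y z. lt x y \<longrightarrow> lt y z \<longrightarrow> lt x z) \<and>
     (\<forall>x y. x \<noteq> y \<longrightarrow> lt x y \<or> lt y x) \<and>
     (\<forall>x y z. lt x y \<longrightarrow> lt (z + x) (z + y)) \<and>
     (\<forall>x y z. lt x y \<longrightarrow> lt (x + z) (y + z))"

definition lex_less :: "('f \<Rightarrow> 'f \<Rightarrow> bool) \<Rightarrow> ('g \<Rightarrow> 'g \<Rightarrow> bool) \<Rightarrow> 'f \<times> 'g \<Rightarrow> 'f \<times> 'g \<Rightarrow> bool" where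
  "lex_less lF lG p q \<longleftrightarrow> lF (fst p) (fst q) \<or> (fst p = fst q \<and> lG (snd p) (snd q))"

definition lex_le :: "('f \<Rightarrow> 'f \<Rightarrow> bool) \<Rightarrow> ('g \<Rightarrow> 'g \<Rightarrow> bool) \<Rightarrow> 'f \<times> 'g \<Rightarrow> 'f \<times> 'g \<Rightarrow> bool" where
  "lex_le lF lG p q \<longleftrightarrow> lex_less lF lG p q \<or> p = q"

fun reduced_word :: "('f::group_add + 'g::group_add) list \<Rightarrow> bool" where
  "reduced_word [] = True"
| "reduced_word [Inl f] = (f \<noteq> 0)"
| "reduced_word [Inr g] = (g \<noteq> 0)"
| "reduced_word (Inl f # Inl f' # w) = False"
| "reduced_word (Inr g # Inr g' # w) = False"
| "reduced_word (Inl f # Inr g # w) = (f \<noteq> 0 \<and> reduced_word (Inr g # w))"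
| "reduced_word (Inr g # Inl f # w) = (g \<noteq> 0 \<and> reduced_word (Inl f # w))"

definition free_product :: "('f::group_add + 'g::group_add) list set" where
  "free_product = {w. reduced_word w}"

definition alpha :: "('f::group_add + 'g::group_add) list \<Rightarrow> 'f \<times> 'g" where
  "alpha w = (sum_list [f. Inl f \<leftarrow> w], sum_list [g. Inr g \<leftarrow> w])"

(* group ring R = Z(F x G) as finitely supported functions, multiplication = convolution *)
type_synonym ('f, 'g) gring = "('f \<times> 'g) \<Rightarrow>\<^sub>0 int"
type_synonym ('f, 'g) gpoly = "nat \<Rightarrow>\<^sub>0 ('f, 'g) gring"

(* 2x2 matrices:  M2 a b c d  =  [[a, b], [c, d]] *)
datatype 'r mat2 = M2 'r 'r 'r 'r

fun m2_mult :: "'r::semiring_0 mat2 \<Rightarrow> 'r mat2 \<Rightarrow> 'r mat2" where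
  "m2_mult (M2 a b c d) (M2 a' b' c' d') =
     M2 (a * a' + b * c') (a * b' + b * d') (c * a' + d * c') (c * b' + d * d')"

fun m2_minus :: "'r::ab_group_add mat2 \<Rightarrow> 'r mat2 \<Rightarrow> 'r mat2" where
  "m2_minus (M2 a b c d) (M2 a' b' c' d') = M2 (a - a') (b - b') (c - c') (d - d')"

definition m2_one :: "'r::semiring_1 mat2" where
  "m2_one = M2 1 0 0 1"

fun m2_map :: "('r \<Rightarrow> 's) \<Rightarrow> 'r mat2 \<Rightarrow> 's mat2" where
  "m2_map h (M2 a b c d) = M2 (h a) (h b) (h c) (h d)"

fun m2_entries :: "bool \<Rightarrow> 'r mat2 \<Rightarrow> 'r list" where
  "m2_entries offd (M2 a b c d) = [a, d] @ (if offd then [b, c] else [c, b])"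

definition gF :: "'f::group_add \<Rightarrow> ('f, 'g::group_add) gring" where
  "gF f = Poly_Mapping.single (f, 0) 1"

definition gG :: "'g::group_add \<Rightarrow> ('f::group_add, 'g) gring" where
  "gG g = Poly_Mapping.single (0, g) 1"

definition const_poly :: "('f::group_add, 'g::group_add) gring \<Rightarrow> ('f, 'g) gpoly" where
  "const_poly r = Poly_Mapping.single 0 r"

definition t_times :: "('f::group_add, 'g::group_add) gring \<Rightarrow> ('f, 'g) gpoly" where
  "t_times r = Poly_Mapping.single 1 r"

fun rho_letter :: "('f::group_add + 'g::group_add) \<Rightarrow> ('f, 'g) gpoly mat2" where
  "rho_letter (Inl f) = M2 (const_poly (gF f)) (t_times (gF f - 1)) 0 1"
| "rho_letter (Inr g) = M2 1 0 (t_times (gG g - 1)) (const_poly (gG g))"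

definition rho :: "('f::group_add + 'g::group_add) list \<Rightarrow> ('f, 'g) gpoly mat2" where
  "rho w = foldr (\<lambda>x M. m2_mult (rho_letter x) M) w m2_one"

definition R_pos :: "('f \<Rightarrow> 'f \<Rightarrow> bool) \<Rightarrow> ('g \<Rightarrow> 'g \<Rightarrow> bool) \<Rightarrow> ('f::group_add, 'g::group_add) gring \<Rightarrow> bool" where
  "R_pos lF lG r \<longleftrightarrow>
     (\<exists>m \<in> Poly_Mapping.keys r. (\<forall>k \<in> Poly_Mapping.keys r. k \<noteq> m \<longrightarrow> lex_less lF lG k m) \<and> Poly_Mapping.lookup r m > 0)"

definition coeff_mat :: "('f::group_add, 'g::group_add) gpoly mat2 \<Rightarrow> nat \<Rightarrow> ('f, 'g) gring mat2" where
  "coeff_mat M n = m2_map (\<lambda>p. Poly_Mapping.lookup p n) M"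

definition mat_pos :: "bool \<Rightarrow> ('f \<Rightarrow> 'f \<Rightarrow> bool) \<Rightarrow> ('g \<Rightarrow> 'g \<Rightarrow> bool) \<Rightarrow> ('f::group_add, 'g::group_add) gpoly mat2 \<Rightarrow> bool" where
  "mat_pos offd lF lG M \<longleftrightarrow>
     (\<exists>n. (\<forall>m < n. coeff_mat M m = M2 0 0 0 0) \<and> coeff_mat M n \<noteq> M2 0 0 0 0 \<and>
          R_pos lF lG (hd (filter (\<lambda>r. r \<noteq> 0) (m2_entries offd (coeff_mat M n)))))"

definition prec :: "bool \<Rightarrow> ('f \<Rightarrow> 'f \<Rightarrow> bool) \<Rightarrow> ('g \<Rightarrow> 'g \<Rightarrow> bool) \<Rightarrow>
    ('f::group_add + 'g::group_add) list \<Rightarrow> ('f + 'g) list \<Rightarrow> bool" where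
  "prec offd lF lG x y \<longleftrightarrow> mat_pos offd lF lG (m2_minus (rho y) (rho x))"

definition preceq :: "bool \<Rightarrow> ('f \<Rightarrow> 'f \<Rightarrow> bool) \<Rightarrow> ('g \<Rightarrow> 'g \<Rightarrow> bool) \<Rightarrow>
    ('f::group_add + 'g::group_add) list \<Rightarrow> ('f + 'g) list \<Rightarrow> bool" where
  "preceq offd lF lG x y \<longleftrightarrow> prec offd lF lG x y \<or> x = y"

end

theory Submission
  imports Defs
begin

text \<open>Setting \<open>t = 0\<close> in \<open>\<rho>\<close> kills the off-diagonal entries, so the constant coefficient of
  \<open>\<rho>(w)\<close> is the diagonal matrix \<open>diag(f, g)\<close> with \<open>\<alpha>(w) = (f, g)\<close>.  Hence if
  \<open>\<alpha>(x) \<noteq> \<alpha>(y)\<close>, the sign of \<open>\<rho>(y) - \<rho>(x)\<close> is already decided at \<open>t\<^sup>0\<close>, by the first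
  nonzero diagonal entry \<open>f\<^sub>y - f\<^sub>x\<close> or \<open>g\<^sub>y - g\<^sub>x\<close> of \<open>R\<close>; the positivity of such a
  difference of two group elements says precisely that the second one is lexicographically
  smaller.\<close>

lemma lookup_mult_zero:
  fixes f g :: "'a::canonically_ordered_monoid_add \<Rightarrow>\<^sub>0 'r::semiring_0"
  shows "Poly_Mapping.lookup (f * g) 0 = Poly_Mapping.lookup f 0 * Poly_Mapping.lookup g 0"
proof -
  have "(\<Sum>q. Poly_Mapping.lookup g q when 0 = l + q) = (Poly_Mapping.lookup g 0 when l = 0)"
    for l :: 'a
  proof -
    have "(\<Sum>q. Poly_Mapping.lookup g q when 0 = l + q)
        = (\<Sum>q. (Poly_Mapping.lookup g q when l = 0) when q = 0)"
      by (rule Sum_any.cong) (auto simp: when_def)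
    then show ?thesis by simp
  qed
  then have "Poly_Mapping.lookup (f * g) 0
      = (\<Sum>l. Poly_Mapping.lookup f l * Poly_Mapping.lookup g 0 when l = 0)"
    by (simp add: lookup_mult mult_when)
  then show ?thesis by simp
qed

lemma single_one_eq_iff [simp]:
  "Poly_Mapping.single a (1::'r::zero_neq_one) = Poly_Mapping.single b 1 \<longleftrightarrow> a = b"
  by (metis lookup_single_eq lookup_single_not_eq zero_neq_one)

lemma gF_eq_iff [simp]: "gF f = gF f' \<longleftrightarrow> f = f'"
  by (simp add: gF_def)

lemma gG_eq_iff [simp]: "gG g = gG g' \<longleftrightarrow> g = g'"
  by (simp add: gG_def)

lemma coeff_mat_m2_minus:
  "coeff_mat (m2_minus M N) n = m2_minus (coeff_mat M n) (coeff_mat N n)"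
  by (cases M; cases N) (simp add: coeff_mat_def lookup_minus)

lemma coeff_mat_rho_zero:
  "coeff_mat (rho w) 0 = M2 (gF (fst (alpha w))) 0 0 (gG (snd (alpha w)))"
proof (induction w)
  case Nil
  show ?case
    by (simp add: coeff_mat_def rho_def m2_one_def alpha_def gF_def gG_def
        flip: zero_prod_def)
next
  case (Cons a w)
  obtain A B C D where rho_w: "rho w = M2 A B C D"
    by (cases "rho w")
  have rho_Cons: "rho (a # w) = m2_mult (rho_letter a) (rho w)"
    by (simp add: rho_def)
  from Cons rho_w have IH:
    "Poly_Mapping.lookup A 0 = gF (fst (alpha w))" "Poly_Mapping.lookup B 0 = 0"
    "Poly_Mapping.lookup C 0 = 0" "Poly_Mapping.lookup D 0 = gG (snd (alpha w))"
    by (simp_all add: coeff_mat_def)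
  show ?case
  proof (cases a)
    case (Inl f)
    then have "alpha (a # w) = (f + fst (alpha w), snd (alpha w))"
      by (simp add: alpha_def)
    then show ?thesis
      unfolding rho_Cons rho_w using Inl
      by (simp add: coeff_mat_def lookup_add lookup_mult_zero IH const_poly_def t_times_def
          gF_def mult_single lookup_single)
  next
    case (Inr g)
    then have "alpha (a # w) = (fst (alpha w), g + snd (alpha w))"
      by (simp add: alpha_def)
    then show ?thesis
      unfolding rho_Cons rho_w using Inr
      by (simp add: coeff_mat_def lookup_add lookup_mult_zero IH const_poly_def t_times_def
          gG_def mult_single lookup_single)
  qed
qed

lemma mat_pos_iff_coeff_mat_zero:
  assumes "coeff_mat M 0 \<noteq> M2 0 0 0 0"
  shows "mat_pos offd lF lG M \<longleftrightarrow>
    R_pos lF lG (hd (filter (\<lambda>r. r \<noteq> 0) (m2_entries offd (coeff_mat M 0))))"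
proof
  assume "mat_pos offd lF lG M"
  then obtain n where n: "\<forall>m < n. coeff_mat M m = M2 0 0 0 0"
    "R_pos lF lG (hd (filter (\<lambda>r. r \<noteq> 0) (m2_entries offd (coeff_mat M n))))"
    unfolding mat_pos_def by blast
  with assms have "n = 0"
    by (cases n) auto
  with n(2) show "R_pos lF lG (hd (filter (\<lambda>r. r \<noteq> 0) (m2_entries offd (coeff_mat M 0))))"
    by simp
qed (use assms in \<open>auto simp: mat_pos_def\<close>)

lemma hd_nonzero_m2_entries_diag:
  "a \<noteq> 0 \<or> d \<noteq> 0 \<Longrightarrow>
    hd (filter (\<lambda>r. r \<noteq> 0) (m2_entries offd (M2 a 0 0 d))) = (if a \<noteq> 0 then a else d)"
  by (cases offd) auto

lemma R_pos_single_diff_imp_lex_less: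
  assumes "a \<noteq> b" and "R_pos lF lG (Poly_Mapping.single a 1 - Poly_Mapping.single b 1)"
  shows "lex_less lF lG b a"
proof -
  let ?r = "Poly_Mapping.single a 1 - Poly_Mapping.single b (1::int)"
  from assms(2) obtain m where m: "m \<in> Poly_Mapping.keys ?r"
    "\<forall>k \<in> Poly_Mapping.keys ?r. k \<noteq> m \<longrightarrow> lex_less lF lG k m" "Poly_Mapping.lookup ?r m > 0"
    unfolding R_pos_def by blast
  from m(3) have "m = a" "m \<noteq> b"
    by (auto simp: lookup_minus lookup_single when_def split: if_splits)
  moreover have "b \<in> Poly_Mapping.keys ?r"
    using assms(1) by (simp add: in_keys_iff lookup_minus lookup_single when_def)
  ultimately show ?thesis
    using m(2) by auto
qed

lemma R_pos_gF_diff_imp_less: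
  "f \<noteq> f' \<Longrightarrow> R_pos lF lG (gF f' - gF f) \<Longrightarrow> lF f f'"
  using R_pos_single_diff_imp_lex_less[of "(f', 0)" "(f, 0)" lF lG]
  by (simp add: gF_def lex_less_def)

lemma R_pos_gG_diff_imp_less:
  "\<not> lF 0 0 \<Longrightarrow> g \<noteq> g' \<Longrightarrow> R_pos lF lG (gG g' - gG g) \<Longrightarrow> lG g g'"
  using R_pos_single_diff_imp_lex_less[of "(0, g')" "(0, g)" lF lG]
  by (simp add: gG_def lex_less_def)

lemma prec_imp_lex_less_alpha:
  fixes lF :: "'f::group_add \<Rightarrow> 'f \<Rightarrow> bool" and lG :: "'g::group_add \<Rightarrow> 'g \<Rightarrow> bool"
  assumes "\<not> lF 0 0" and "prec offd lF lG x y" and "alpha x \<noteq> alpha y"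
  shows "lex_less lF lG (alpha x) (alpha y)"
proof -
  obtain fx gx fy gy where alpha_x: "alpha x = (fx, gx)" and alpha_y: "alpha y = (fy, gy)"
    by fastforce
  define a :: "('f, 'g) gring" where "a = gF fy - gF fx"
  define d :: "('f, 'g) gring" where "d = gG gy - gG gx"
  have coeff: "coeff_mat (m2_minus (rho y) (rho x)) 0 = M2 a 0 0 d"
    by (simp add: coeff_mat_m2_minus coeff_mat_rho_zero alpha_x alpha_y a_def d_def)
  have nonzero: "a \<noteq> 0 \<or> d \<noteq> 0"
    using assms(3) alpha_x alpha_y by (auto simp: a_def d_def)
  with assms(2) have "R_pos lF lG (hd (filter (\<lambda>r. r \<noteq> 0) (m2_entries offd (M2 a 0 0 d))))"
    by (auto simp: prec_def mat_pos_iff_coeff_mat_zero coeff simp del: m2_entries.simps)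
  then have pos: "R_pos lF lG (if a \<noteq> 0 then a else d)"
    by (simp only: hd_nonzero_m2_entries_diag[OF nonzero])
  show ?thesis
  proof (cases "fx = fy")
    case True
    with assms(3) alpha_x alpha_y have "gx \<noteq> gy"
      by simp
    moreover from pos True have "R_pos lF lG (gG gy - gG gx)"
      by (simp add: a_def d_def)
    ultimately have "lG gx gy"
      using R_pos_gG_diff_imp_less assms(1) by blast
    with True show ?thesis
      by (simp add: lex_less_def alpha_x alpha_y)
  next
    case False
    with pos have "R_pos lF lG (gF fy - gF fx)"
      by (simp add: a_def)
    with False have "lF fx fy"
      using R_pos_gF_diff_imp_less by blast
    then show ?thesis
      by (simp add: lex_less_def alpha_x alpha_y)
  qed
qed

theorem proposition4p2:
  fixes lF :: "'f::group_add \<Rightarrow> 'f \<Rightarrow> bool" and lG :: "'g::group_add \<Rightarrow> 'g \<Rightarrow> bool"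
    and offd :: bool
    and x y :: "('f + 'g) list"
  assumes "ordered_group lF" and "ordered_group lG"
    and "x \<in> free_product" and "y \<in> free_product"
    and "preceq offd lF lG x y"
  shows "lex_le lF lG (alpha x) (alpha y)"
proof (cases "alpha x = alpha y")
  case False
  with assms(5) have "prec offd lF lG x y"
    by (auto simp: preceq_def)
  moreover have "\<not> lF 0 0"
    using assms(1) by (simp add: ordered_group_def)
  ultimately show ?thesis
    using False prec_imp_lex_less_alpha by (auto simp: lex_le_def)
qed (simp add: lex_le_def)

end
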